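(* Let $p$ be an odd prime and let $X$ be a finite family of $4p-3$ lattice points in $\mathbb{Z}^2$ (repetitions allowed). Then \[ 3-2(p-1,X)-2(p,X)+(2p-1,X)+(2p,X)\equiv 0 \pmod p. \]
   Context: For a finite family $X$ of lattice points in $\mathbb{Z}^2$ (points may repeat; subsets are subfamilies, i.e. subsets of the index set) and an integer $n\ge 0$, $(n,X)$ denotes the number of $n$-element subfamilies of $X$ whose coordinatewise sum is congruent to $(0,0)$ modulo $p$. *)

theory Defs
  imports Main "HOL-Number_Theory.Cong"
begin

text \<open>A finite family of lattice points is a map X from a finite index set I to int x int.
  zero_sum_count p n I X is the number of n-element subsets S of the index set I
  such that the coordinatewise sum of X over S is congruent to (0,0) modulo p.\<close>
definition zero_sum_count :: "nat \<Rightarrow> nat \<Rightarrow> 'i set \<Rightarrow> ('i \<Rightarrow> int \<times> int) \<Rightarrow> nat" where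
  "zero_sum_count p n I X =
     card {S. S \<subseteq> I \<and> card S = n \<and>
              [(\<Sum>i\<in>S. fst (X i)) = 0] (mod int p) \<and>
              [(\<Sum>i\<in>S. snd (X i)) = 0] (mod int p)}"

end

theory Submission
  imports Defs "HOL-Number_Theory.Number_Theory"
begin

text \<open>Regard functions of a subfamily \<open>S \<subseteq> I\<close> as integer polynomials in the indicators
  \<open>[i \<in> S]\<close>. If such a polynomial has degree below \<open>|I|\<close>, its alternating sum
  \<open>\<Sum>S\<subseteq>I. (-1)^|S| f S\<close> vanishes. Take \<open>f = (1 - A^(p-1)) (1 - B^(p-1)) G\<close>, where \<open>A, B\<close>
  are the coordinate sums over \<open>S\<close>: by Fermat the first two factors are, modulo \<open>p\<close>, the
  indicator that \<open>S\<close> is a zero-sum subfamily, and \<open>G\<close>, built from \<open>|S|\<close> and \<open>|S| choose p\<close>,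
  has degree \<open>2p - 2\<close> and satisfies \<open>(-1)^|S| G \<equiv> w |S|\<close> with \<open>w\<close> the weight
  \<open>3, -2, -2, 1, 1\<close> at \<open>0, p - 1, p, 2p - 1, 2p\<close>. The total degree is \<open>4p - 4 < 4p - 3\<close>,
  so the \<open>w\<close>-weighted number of zero-sum subfamilies is \<open>0\<close> modulo \<open>p\<close>.\<close>

inductive indicator_poly :: "nat \<Rightarrow> ('i set \<Rightarrow> int) \<Rightarrow> bool" where
  const: "indicator_poly 0 (\<lambda>S. c)"
| mono: "indicator_poly d f \<Longrightarrow> d \<le> e \<Longrightarrow> indicator_poly e f"
| add: "indicator_poly d f \<Longrightarrow> indicator_poly d g \<Longrightarrow> indicator_poly d (\<lambda>S. f S + g S)"
| mult_indicator: "indicator_poly d f \<Longrightarrow> indicator_poly (Suc d) (\<lambda>S. of_bool (i \<in> S) * f S)"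

lemma indicator_poly_cong: "indicator_poly d f \<Longrightarrow> (\<And>S. f S = g S) \<Longrightarrow> indicator_poly d g"
  by (metis ext)

lemma indicator_poly_const: "indicator_poly d (\<lambda>S. c)"
  using indicator_poly.const indicator_poly.mono by blast

lemma indicator_poly_indicator: "indicator_poly 1 (\<lambda>S. of_bool (i \<in> S))"
  using indicator_poly.mult_indicator[OF indicator_poly.const[of 1], of i] by simp

lemma indicator_poly_scale: "indicator_poly d f \<Longrightarrow> indicator_poly d (\<lambda>S. c * f S)"
proof (induction rule: indicator_poly.induct)
  case (add d f g)
  show ?case
    using indicator_poly.add[OF add.IH] by (rule indicator_poly_cong) (simp add: algebra_simps)
next
  case (mult_indicator d f i)
  show ?case
    using indicator_poly.mult_indicator[OF mult_indicator.IH, of i]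
    by (rule indicator_poly_cong) (simp add: algebra_simps)
qed (auto intro: indicator_poly.intros)

lemma indicator_poly_diff:
  "indicator_poly d f \<Longrightarrow> indicator_poly d g \<Longrightarrow> indicator_poly d (\<lambda>S. f S - g S)"
  using indicator_poly.add[OF _ indicator_poly_scale[of d g "-1"]] by simp

lemma indicator_poly_mult:
  "indicator_poly d f \<Longrightarrow> indicator_poly e g \<Longrightarrow> indicator_poly (d + e) (\<lambda>S. f S * g S)"
proof (induction rule: indicator_poly.induct)
  case (const c)
  then show ?case by (simp add: indicator_poly_scale)
next
  case (mono d f e')
  then show ?case by (auto intro: indicator_poly.mono)
next
  case (add d f h)
  show ?case
    using indicator_poly.add[OF add.IH[OF add.prems]]
    by (rule indicator_poly_cong) (simp add: algebra_simps)
next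
  case (mult_indicator d f i)
  show ?case
    using indicator_poly.mult_indicator[OF mult_indicator.IH[OF mult_indicator.prems], of i]
    by (simp add: mult.assoc)
qed

lemma indicator_poly_sum:
  "(\<And>x. x \<in> A \<Longrightarrow> indicator_poly d (g x)) \<Longrightarrow> indicator_poly d (\<lambda>S. \<Sum>x\<in>A. g x S)"
proof (induction A rule: infinite_finite_induct)
  case (insert x F)
  then show ?case by (simp add: indicator_poly.add)
qed (simp_all add: indicator_poly_const)

lemma indicator_poly_prod:
  "(\<And>x. x \<in> A \<Longrightarrow> indicator_poly d (g x)) \<Longrightarrow> indicator_poly (d * card A) (\<lambda>S. \<Prod>x\<in>A. g x S)"
proof (induction A rule: infinite_finite_induct)
  case (insert x F)
  then show ?case using indicator_poly_mult[of d "g x" "d * card F"] by (simp add: add.commute)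
qed (simp_all add: indicator_poly_const)

lemma indicator_poly_power: "indicator_poly d f \<Longrightarrow> indicator_poly (d * k) (\<lambda>S. f S ^ k)"
proof (induction k)
  case (Suc k)
  then show ?case using indicator_poly_mult[of d f "d * k"] by simp
qed (simp add: indicator_poly_const)

lemma indicator_poly_succ_power_diff:
  assumes "indicator_poly 1 L"
  shows "indicator_poly (m - 1) (\<lambda>S. (L S + 1) ^ m - L S ^ m)"
proof -
  have "(L S + 1) ^ m - L S ^ m = (\<Sum>k<m. of_nat (m choose k) * L S ^ k)" for S
    by (simp add: binomial_ring lessThan_Suc_atMost[symmetric])
  moreover have "indicator_poly (m - 1) (\<lambda>S. \<Sum>k<m. of_nat (m choose k) * L S ^ k)"
  proof (rule indicator_poly_sum)
    fix k assume "k \<in> {..<m}"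
    show "indicator_poly (m - 1) (\<lambda>S. of_nat (m choose k) * L S ^ k)"
      by (rule indicator_poly.mono[OF indicator_poly_scale[OF indicator_poly_power[OF assms]]])
         (use \<open>k \<in> {..<m}\<close> in auto)
  qed
  ultimately show ?thesis by (simp add: indicator_poly_cong)
qed

lemma alternating_sum_Pow_insert:
  assumes "finite J" "i \<notin> J"
  shows "(\<Sum>S\<in>Pow (insert i J). (-1) ^ card S * h S)
       = (\<Sum>S\<in>Pow J. (-1) ^ card S * (h S - h (insert i S)) :: int)"
proof -
  have "inj_on (insert i) (Pow J)"
    using assms(2) unfolding inj_on_def by (metis PowD insert_ident subsetD)
  moreover have "Pow J \<inter> insert i ` Pow J = {}" using assms(2) by auto
  ultimately have "(\<Sum>S\<in>Pow (insert i J). (-1) ^ card S * h S)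
      = (\<Sum>S\<in>Pow J. (-1) ^ card S * h S) + (\<Sum>S\<in>Pow J. (-1) ^ card (insert i S) * h (insert i S))"
    using assms(1) by (simp add: Pow_insert sum.union_disjoint sum.reindex)
  also have "(\<Sum>S\<in>Pow J. (-1) ^ card (insert i S) * h (insert i S))
      = (\<Sum>S\<in>Pow J. - ((-1) ^ card S * h (insert i S)))"
  proof (rule sum.cong)
    fix S assume "S \<in> Pow J"
    then have "finite S" "i \<notin> S" using assms finite_subset by auto
    then show "(-1) ^ card (insert i S) * h (insert i S) = - ((-1) ^ card S * h (insert i S))"
      by simp
  qed simp
  finally show ?thesis by (simp add: sum_subtractf sum_negf algebra_simps)
qed

text \<open>The alternating sum is an iterated finite difference, one per element of \<open>J\<close>; each
  difference lowers the degree. The set \<open>K\<close> records the indicators already set to 1.\<close>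

lemma indicator_poly_alternating_sum:
  assumes "indicator_poly d f" "finite J" "d < card J"
  shows "(\<Sum>S\<in>Pow J. (-1) ^ card S * f (S \<union> K)) = 0"
  using assms
proof (induction arbitrary: J K rule: indicator_poly.induct)
  case (const c)
  then obtain i J' where "J = insert i J'" "i \<notin> J'"
    by (metis card.empty less_nat_zero_code mk_disjoint_insert ex_in_conv)
  with const show ?case by (simp add: alternating_sum_Pow_insert)
next
  case (add d f g)
  then show ?case by (simp add: distrib_left sum.distrib)
next
  case (mult_indicator d f i)
  consider "i \<in> K" | "i \<notin> K" "i \<notin> J" | "i \<notin> K" "i \<in> J" by blast
  then show ?case
  proof cases
    case 1
    then show ?thesis using mult_indicator by simp
  next
    case 2
    then show ?thesis by (intro sum.neutral) auto
  next
    case 3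
    define J' where "J' = J - {i}"
    have J: "J = insert i J'" "i \<notin> J'" "finite J'" "d < card J'"
      using 3 mult_indicator.prems by (auto simp: J'_def)
    have "(\<Sum>S\<in>Pow J. (-1) ^ card S * (of_bool (i \<in> S \<union> K) * f (S \<union> K)))
        = (\<Sum>S\<in>Pow J'. - ((-1) ^ card S * f (S \<union> insert i K)))"
      unfolding J(1) using J(2,3) 3
      by (subst alternating_sum_Pow_insert) (auto intro!: sum.cong)
    also have "\<dots> = 0"
      using mult_indicator.IH[OF J(3,4), of "insert i K"] by (simp add: sum_negf)
    finally show ?thesis .
  qed
qed simp

lemma sum_Pow_cong_0_if_indicator_poly:
  assumes "indicator_poly d f" "finite I" "d < card I"
    and "\<And>S. S \<subseteq> I \<Longrightarrow> [(-1) ^ card S * f S = g S] (mod m)"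
  shows "[(\<Sum>S\<in>Pow I. g S) = 0] (mod m)"
proof -
  have "[(\<Sum>S\<in>Pow I. g S) = (\<Sum>S\<in>Pow I. (-1) ^ card S * f (S \<union> {}))] (mod m)"
    using assms(4) by (intro cong_sum) (simp add: cong_sym)
  then show ?thesis
    using indicator_poly_alternating_sum[OF assms(1-3), of "{}"] by simp
qed

definition linear_form :: "'i set \<Rightarrow> ('i \<Rightarrow> int) \<Rightarrow> 'i set \<Rightarrow> int" where
  "linear_form I a S = (\<Sum>i\<in>I. a i * of_bool (i \<in> S))"

lemma linear_form_eq_sum: "finite I \<Longrightarrow> S \<subseteq> I \<Longrightarrow> linear_form I a S = sum a S"
  unfolding linear_form_def by (simp add: sum.inter_restrict[symmetric] Int_absorb1)

lemma indicator_poly_linear_form: "indicator_poly 1 (linear_form I a)"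
  unfolding linear_form_def
  by (intro indicator_poly_sum indicator_poly_scale indicator_poly_indicator)

definition choose_form :: "'i set \<Rightarrow> nat \<Rightarrow> 'i set \<Rightarrow> int" where
  "choose_form I k S = (\<Sum>T | T \<subseteq> I \<and> card T = k. \<Prod>i\<in>T. of_bool (i \<in> S))"

lemma choose_form_eq_binomial:
  assumes "finite I" "S \<subseteq> I"
  shows "choose_form I k S = int (card S choose k)"
proof -
  have prod_indicator: "(\<Prod>i\<in>T. of_bool (i \<in> S)) = (of_bool (T \<subseteq> S) :: int)"
    if "finite T" for T
    using that by (induction T rule: finite_induct) auto
  have "choose_form I k S = (\<Sum>T | T \<subseteq> I \<and> card T = k. of_bool (T \<subseteq> S))"
    unfolding choose_form_def using assms(1)
    by (intro sum.cong refl prod_indicator) (auto dest: finite_subset)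
  also have "\<dots> = int (card {T. T \<subseteq> S \<and> card T = k})"
    using assms by (simp add: Int_def) (metis (lifting) subset_trans)
  also have "\<dots> = int (card S choose k)"
    using assms by (simp add: n_subsets finite_subset)
  finally show ?thesis .
qed

lemma indicator_poly_choose_form: "indicator_poly k (choose_form I k)"
proof -
  have "indicator_poly k (\<lambda>S. \<Prod>i\<in>T. of_bool (i \<in> S))" if "card T = k" for T :: "'i set"
    using indicator_poly_prod[of T 1, OF indicator_poly_indicator] that by simp
  then show ?thesis
    unfolding choose_form_def by (intro indicator_poly_sum) blast
qed

lemma fermat_theorem_int:
  fixes a :: int
  assumes "prime p" "\<not> int p dvd a"
  shows "[a ^ (p - 1) = 1] (mod int p)"
proof -
  have "coprime a (int p)"
    using assms by (metis coprime_commute prime_imp_coprime prime_nat_int_transfer)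
  then show ?thesis
    using residues.euler_theorem[of "int p"] totient_prime[OF assms(1)] prime_gt_1_nat[OF assms(1)]
    by (simp add: residues_def)
qed

lemma fermat_indicator:
  fixes a :: int
  assumes "prime p"
  shows "[1 - a ^ (p - 1) = of_bool (int p dvd a)] (mod int p)"
proof (cases "int p dvd a")
  case True
  then have "int p dvd a ^ (p - 1)"
    using prime_gt_1_nat[OF assms] by (meson dvd_power dvd_trans zero_less_diff)
  then show ?thesis
    using True by (simp add: cong_0_iff[symmetric] cong_diff[OF cong_refl, of _ 0, simplified])
next
  case False
  then show ?thesis
    using cong_diff[OF cong_refl fermat_theorem_int[OF assms False], of 1] by simp
qed

lemma binomial_prime_cong_div:
  assumes "prime p"
  shows "[n choose p = n div p] (mod p)"
proof -
  have p: "1 < p" using prime_gt_1_nat[OF assms] .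
  have "[(q * p + r) choose p = q] (mod p)" if "r < p" for q r
  proof (induction q)
    case 0
    then show ?case using that by (simp add: binomial_eq_0)
  next
    case (Suc q)
    define m where "m = q * p + r"
    have "Suc q * p + r choose p = (\<Sum>k\<le>p. (m choose k) * (p choose (p - k)))"
      unfolding m_def by (subst vandermonde) (simp add: add_ac)
    also have "\<dots> = 1 + (m choose p) + (\<Sum>k\<in>{1..<p}. (m choose k) * (p choose (p - k)))"
    proof -
      have "{..p} = insert 0 (insert p {1..<p})" using p by auto
      then show ?thesis using p by simp
    qed
    also have "[\<dots> = 1 + q + 0] (mod p)"
    proof (intro cong_add cong_refl)
      show "[m choose p = q] (mod p)" using Suc.IH by (simp add: m_def)
      have "p dvd (p choose (p - k))" if "k \<in> {1..<p}" for k
        using that assms by (intro dvd_choose_prime) auto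
      then show "[(\<Sum>k\<in>{1..<p}. (m choose k) * (p choose (p - k))) = 0] (mod p)"
        unfolding cong_0_iff by (intro dvd_sum dvd_mult) simp
    qed
    finally show ?case by simp
  qed
  then show ?thesis
    using p by (metis div_mult_mod_eq mod_less_divisor not_less_zero not_one_less_zero gr0I)
qed

definition zero_sum_weight :: "nat \<Rightarrow> nat \<Rightarrow> int" where
  "zero_sum_weight p n = 3 * of_bool (n = 0) - 2 * of_bool (n = p - 1) - 2 * of_bool (n = p)
     + of_bool (n = 2 * p - 1) + of_bool (n = 2 * p)"

text \<open>Modulo \<open>p\<close>, for \<open>n = q p + r\<close> with \<open>0 \<le> r < p\<close>, Fermat turns \<open>n ^ (p - 1)\<close> and
  \<open>(n + 1) ^ (p - 1)\<close> into the tests \<open>r \<noteq> 0\<close> and \<open>r \<noteq> p - 1\<close>, and \<open>n choose p \<equiv> q\<close>.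
  So \<open>weight_poly p n (n choose p)\<close> is a polynomial of degree \<open>2 p - 2\<close> in the indicators of
  an \<open>n\<close>-set which agrees with \<open>(-1) ^ n * zero_sum_weight p n\<close> for all \<open>n \<le> 4 p - 3\<close>.\<close>

definition weight_poly :: "nat \<Rightarrow> int \<Rightarrow> int \<Rightarrow> int" where
  "weight_poly p n c = 1 + 2 * (n + 1) ^ (p - 1) - 3 * n ^ (p - 1) - c * ((n + 1) ^ (p - 1) - n ^ (p - 1))"

lemma zero_sum_weight_residue_form:
  assumes "3 \<le> p" "r < p" "q * p + r \<le> 4 * p - 3" "odd p"
  shows "(-1) ^ (q + r) * (1 + 2 * of_bool (r \<noteq> p - 1) - 3 * of_bool (r \<noteq> 0)
           - int q * (of_bool (r \<noteq> p - 1) - of_bool (r \<noteq> 0))) = zero_sum_weight p (q * p + r)"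
proof -
  have "q < 4"
  proof (rule ccontr)
    assume "\<not> q < 4"
    then have "4 * p \<le> q * p" by simp
    with assms(1,3) show False by linarith
  qed
  then consider "q = 0" | "q = 1" | "q = 2" | "q = 3" by linarith
  then show ?thesis
    using assms by cases (auto simp: zero_sum_weight_def)
qed

lemma weight_poly_cong:
  assumes "prime p" "odd p" "n \<le> 4 * p - 3"
  shows "[(-1) ^ n * weight_poly p (int n) (int (n choose p)) = zero_sum_weight p n] (mod int p)"
proof -
  define q r where "q = n div p" and "r = n mod p"
  have p: "3 \<le> p" using prime_ge_2_nat[OF assms(1)] assms(2) by (cases "p = 2") auto
  have n: "n = q * p + r" "r < p" using p by (simp_all add: q_def r_def)
  have pow: "[a ^ (p - 1) = of_bool (\<not> int p dvd a)] (mod int p)" for a :: int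
    using cong_diff[OF cong_refl fermat_indicator[OF assms(1), of a], of 1]
    by (cases "int p dvd a") simp_all
  have "int p dvd int n \<longleftrightarrow> r = 0"
    by (simp add: r_def dvd_eq_mod_eq_0[symmetric])
  moreover have "int p dvd int n + 1 \<longleftrightarrow> r = p - 1"
  proof -
    have "int p dvd int n + 1 \<longleftrightarrow> Suc n mod p = 0"
      by (metis dvd_eq_mod_eq_0 of_nat_Suc of_nat_dvd_iff add.commute)
    also have "\<dots> \<longleftrightarrow> r = p - 1"
      using p by (auto simp: r_def mod_Suc)
    finally show ?thesis .
  qed
  moreover have "[int (n choose p) = int q] (mod int p)"
    using binomial_prime_cong_div[OF assms(1), of n] by (simp add: q_def cong_int_iff)
  ultimately have "[weight_poly p (int n) (int (n choose p))
      = 1 + 2 * of_bool (r \<noteq> p - 1) - 3 * of_bool (r \<noteq> 0)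
        - int q * (of_bool (r \<noteq> p - 1) - of_bool (r \<noteq> 0))] (mod int p)"
    unfolding weight_poly_def using pow[of "int n"] pow[of "int n + 1"]
    by (intro cong_add cong_diff cong_mult cong_refl) auto
  moreover have "(-1 :: int) ^ n = (-1) ^ (q + r)"
    using assms(2) by (simp add: n(1) power_add power_mult mult.commute)
  ultimately show ?thesis
    using zero_sum_weight_residue_form[OF p n(2) _ assms(2)] assms(3) n(1)
    by (metis cong_scalar_left)
qed

lemma indicator_poly_weight_poly:
  assumes "2 \<le> p" "indicator_poly 1 N" "indicator_poly p C"
  shows "indicator_poly (2 * p - 2) (\<lambda>S. weight_poly p (N S) (C S))"
proof -
  have "indicator_poly (2 * p - 2) (\<lambda>S. N S ^ (p - 1))"
    using indicator_poly_power[OF assms(2), of "p - 1"] by (rule indicator_poly.mono) simp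
  moreover have "indicator_poly (2 * p - 2) (\<lambda>S. (N S + 1) ^ (p - 1))"
    using indicator_poly_power[OF indicator_poly.add[OF assms(2) indicator_poly_const], of "p - 1"]
    by (rule indicator_poly.mono) simp
  moreover have "indicator_poly (2 * p - 2) (\<lambda>S. C S * ((N S + 1) ^ (p - 1) - N S ^ (p - 1)))"
    using indicator_poly_mult[OF assms(3) indicator_poly_succ_power_diff[OF assms(2)]]
    by (rule indicator_poly.mono) (use assms(1) in simp)
  ultimately show ?thesis
    unfolding weight_poly_def
    by (intro indicator_poly_diff indicator_poly.add indicator_poly_scale indicator_poly_const)
qed

definition zero_sum :: "nat \<Rightarrow> ('i \<Rightarrow> int \<times> int) \<Rightarrow> 'i set \<Rightarrow> bool" where
  "zero_sum p X S \<longleftrightarrow> [(\<Sum>i\<in>S. fst (X i)) = 0] (mod int p) \<and> [(\<Sum>i\<in>S. snd (X i)) = 0] (mod int p)"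

definition zero_sum_poly :: "nat \<Rightarrow> 'i set \<Rightarrow> ('i \<Rightarrow> int \<times> int) \<Rightarrow> 'i set \<Rightarrow> int" where
  "zero_sum_poly p I X S =
     (1 - linear_form I (\<lambda>i. fst (X i)) S ^ (p - 1)) * (1 - linear_form I (\<lambda>i. snd (X i)) S ^ (p - 1))
     * weight_poly p (linear_form I (\<lambda>_. 1) S) (choose_form I p S)"

lemma indicator_poly_zero_sum_poly:
  assumes "2 \<le> p"
  shows "indicator_poly (4 * p - 4) (zero_sum_poly p I X)"
proof -
  have "indicator_poly (p - 1) (\<lambda>S. 1 - linear_form I a S ^ (p - 1))" for a
    using indicator_poly_diff[OF indicator_poly_const indicator_poly_power[OF indicator_poly_linear_form]]
    by simp
  from indicator_poly_mult[OF indicator_poly_mult[OF this this]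
      indicator_poly_weight_poly[OF assms indicator_poly_linear_form indicator_poly_choose_form]]
  show ?thesis
    unfolding zero_sum_poly_def by (rule indicator_poly.mono) (use assms in simp)
qed

lemma zero_sum_poly_cong:
  assumes "prime p" "odd p" "finite I" "card I \<le> 4 * p - 3" "S \<subseteq> I"
  shows "[(-1) ^ card S * zero_sum_poly p I X S = of_bool (zero_sum p X S) * zero_sum_weight p (card S)]
           (mod int p)"
proof -
  have "card S \<le> 4 * p - 3"
    using card_mono[OF assms(3,5)] assms(4) by simp
  moreover have "(-1) ^ card S * zero_sum_poly p I X S
      = (1 - (\<Sum>i\<in>S. fst (X i)) ^ (p - 1)) * (1 - (\<Sum>i\<in>S. snd (X i)) ^ (p - 1))
        * ((-1) ^ card S * weight_poly p (int (card S)) (int (card S choose p)))"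
    using assms(3,5)
    by (simp add: zero_sum_poly_def linear_form_eq_sum choose_form_eq_binomial mult_ac)
  moreover have "of_bool (zero_sum p X S)
      = of_bool (int p dvd (\<Sum>i\<in>S. fst (X i))) * (of_bool (int p dvd (\<Sum>i\<in>S. snd (X i))) :: int)"
    by (simp add: zero_sum_def cong_0_iff)
  ultimately show ?thesis
    by (simp only:) (intro cong_mult fermat_indicator weight_poly_cong assms(1,2))
qed

lemma int_zero_sum_count:
  assumes "finite I"
  shows "int (zero_sum_count p n I X) = (\<Sum>S\<in>Pow I. of_bool (zero_sum p X S) * of_bool (card S = n))"
proof -
  have "{S. S \<subseteq> I \<and> card S = n \<and> [(\<Sum>i\<in>S. fst (X i)) = 0] (mod int p)
          \<and> [(\<Sum>i\<in>S. snd (X i)) = 0] (mod int p)} = Pow I \<inter> {S. zero_sum p X S \<and> card S = n}"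
    by (auto simp: zero_sum_def)
  then show ?thesis
    using assms by (simp add: zero_sum_count_def of_bool_conj[symmetric])
qed

lemma sum_zero_sum_weight:
  assumes "finite I"
  shows "(\<Sum>S\<in>Pow I. of_bool (zero_sum p X S) * zero_sum_weight p (card S))
       = 3 - 2 * int (zero_sum_count p (p - 1) I X) - 2 * int (zero_sum_count p p I X)
         + int (zero_sum_count p (2 * p - 1) I X) + int (zero_sum_count p (2 * p) I X)"
proof -
  have "zero_sum_count p 0 I X = 1"
  proof -
    have "{S. S \<subseteq> I \<and> card S = 0 \<and> [(\<Sum>i\<in>S. fst (X i)) = 0] (mod int p)
            \<and> [(\<Sum>i\<in>S. snd (X i)) = 0] (mod int p)} = {{}}"
      using assms by (auto dest: finite_subset)
    then show ?thesis by (simp add: zero_sum_count_def)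
  qed
  moreover have "(\<Sum>S\<in>Pow I. of_bool (zero_sum p X S) * zero_sum_weight p (card S))
       = 3 * int (zero_sum_count p 0 I X) - 2 * int (zero_sum_count p (p - 1) I X)
         - 2 * int (zero_sum_count p p I X) + int (zero_sum_count p (2 * p - 1) I X)
         + int (zero_sum_count p (2 * p) I X)"
    unfolding int_zero_sum_count[OF assms] zero_sum_weight_def
    by (simp add: algebra_simps sum.distrib sum_subtractf sum_distrib_left)
  ultimately show ?thesis by simp
qed

theorem corollary6:
  fixes p :: nat and I :: "'i set" and X :: "'i \<Rightarrow> int \<times> int"
  assumes "prime p" and "odd p"
    and "finite I" and "card I = 4 * p - 3"
  shows "[3 - 2 * int (zero_sum_count p (p - 1) I X) - 2 * int (zero_sum_count p p I X)
          + int (zero_sum_count p (2 * p - 1) I X) + int (zero_sum_count p (2 * p) I X) = 0] (mod int p)"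
proof -
  have "2 \<le> p"
    using prime_ge_2_nat[OF assms(1)] .
  have "[(\<Sum>S\<in>Pow I. of_bool (zero_sum p X S) * zero_sum_weight p (card S)) = 0] (mod int p)"
  proof (rule sum_Pow_cong_0_if_indicator_poly)
    show "indicator_poly (4 * p - 4) (zero_sum_poly p I X)"
      using \<open>2 \<le> p\<close> by (rule indicator_poly_zero_sum_poly)
    show "4 * p - 4 < card I"
      using \<open>2 \<le> p\<close> assms(4) by simp
    show "[(-1) ^ card S * zero_sum_poly p I X S = of_bool (zero_sum p X S) * zero_sum_weight p (card S)]
        (mod int p)" if "S \<subseteq> I" for S
      using assms(1-3) _ that by (rule zero_sum_poly_cong) (simp add: assms(4))
  qed (fact assms)
  then show ?thesis
    by (simp add: sum_zero_sum_weight[OF assms(3)])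
qed

end
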